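(* In the setting described in the context, if Method 1 stops at iteration $k$ (i.e. $x^{k+1}=x^k$), then $x^k\in\operatorname{zer}(A+B)$.
   Context: Let $\mathcal H$ be a real Hilbert space with inner product $\langle\cdot,\cdot\rangle$ and norm $\|\cdot\|$. Let $A_1:\mathcal H\to\mathcal H$ be $\beta$-cocoercive for some $\beta>0$ (i.e. $\langle A_1x-A_1y,x-y\rangle\ge\beta\|A_1x-A_1y\|^2$ for all $x,y$), let $A_2:\mathcal H\to\mathcal H$ be maximally monotone and uniformly continuous, let $B:\mathcal H\rightrightarrows\mathcal H$ be maximally monotone, and set $A:=A_1+A_2$. Assume $\operatorname{zer}(A+B):=\{x:0\in Ax+Bx\}\neq\emptyset$. $J_{\alpha B}:=(I+\alpha B)^{-1}$ for $\alpha>0$, and $P_C$ denotes the orthogonal projection onto a nonempty closed convex set $C$. Fix $\theta,\delta\in(0,1)$, $\bar\delta>0$ with $1-\delta-\bar\delta>0$, and $\alpha_{-1}>0$ with $\alpha_{-1}\le4\beta\bar\delta$. Conceptual Algorithm: pick $x^0\in\mathcal H$. Given $x^k$ and $\alpha_{k-1}$, for $j\in\mathbb N$ let $\bar x^k_j:=J_{\alpha_{k-1}\theta^jB}(x^k-\alpha_{k-1}\theta^jAx^k)$ and let $j(k)$ be the smallest $j\in\mathbb N$ with $\alpha_{k-1}\theta^j\langle A_2x^k-A_2\bar x^k_j,x^k-\bar x^k_j\rangle\le\delta\|x^k-\bar x^k_j\|^2$. Set $\alpha_k:=\alpha_{k-1}\theta^{j(k)}$, $\bar x^k:=J_{\alpha_kB}(x^k-\alpha_kAx^k)$,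 $r_k:=\frac{\bar\delta}{\alpha_k}\|x^k-\bar x^k\|^2$ and $T_k:=\{x\in\mathcal H:\langle \frac{x^k-\bar x^k}{\alpha_k}-(A_2x^k-A_2\bar x^k),x-\bar x^k\rangle\le r_k\}$. Method 1 sets $x^{k+1}:=P_{T_k}(x^k)$ and stops if $x^{k+1}=x^k$. *)

theory Defs
  imports "HOL-Analysis.Analysis"
begin

text \<open>Set-valued operators on a real Hilbert space are modelled as functions
  'a \<Rightarrow> 'a set; a single-valued operator F corresponds to (\<lambda>x. {F x}).\<close>

definition monotone_op :: "('a::real_inner \<Rightarrow> 'a set) \<Rightarrow> bool" where
  "monotone_op B \<longleftrightarrow> (\<forall>x y u v. u \<in> B x \<longrightarrow> v \<in> B y \<longrightarrow> inner (u - v) (x - y) \<ge> 0)"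

definition maximal_monotone :: "('a::real_inner \<Rightarrow> 'a set) \<Rightarrow> bool" where
  "maximal_monotone B \<longleftrightarrow> monotone_op B \<and>
     (\<forall>x u. (\<forall>y v. v \<in> B y \<longrightarrow> inner (u - v) (x - y) \<ge> 0) \<longrightarrow> u \<in> B x)"

definition cocoercive :: "real \<Rightarrow> ('a::real_inner \<Rightarrow> 'a) \<Rightarrow> bool" where
  "cocoercive \<beta> F \<longleftrightarrow> (\<forall>x y. inner (F x - F y) (x - y) \<ge> \<beta> * (norm (F x - F y))\<^sup>2)"

text \<open>Resolvent J_{\<alpha>B} = (I + \<alpha>B)^{-1}: J \<alpha> B z is the point x with z \<in> x + \<alpha> B x.\<close>
definition resolvent :: "real \<Rightarrow> ('a::real_inner \<Rightarrow> 'a set) \<Rightarrow> 'a \<Rightarrow> 'a" where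
  "resolvent \<alpha> B z = (THE x. z - x \<in> (\<lambda>v. \<alpha> *\<^sub>R v) ` B x)"

definition proj :: "'a::real_inner set \<Rightarrow> 'a \<Rightarrow> 'a" where
  "proj C x = (THE p. p \<in> C \<and> (\<forall>y\<in>C. dist x p \<le> dist x y))"

definition fb_point :: "('a::real_inner \<Rightarrow> 'a) \<Rightarrow> ('a \<Rightarrow> 'a) \<Rightarrow> ('a \<Rightarrow> 'a set) \<Rightarrow> real \<Rightarrow> 'a \<Rightarrow> 'a" where
  "fb_point A1 A2 B \<alpha> x = resolvent \<alpha> B (x - \<alpha> *\<^sub>R (A1 x + A2 x))"

text \<open>j(k): smallest j with the line search condition, given x = x^k and \<alpha> = \<alpha>_{k-1}.\<close>
definition ls_index :: "('a::real_inner \<Rightarrow> 'a) \<Rightarrow> ('a \<Rightarrow> 'a) \<Rightarrow> ('a \<Rightarrow> 'a set) \<Rightarrow> real \<Rightarrow> real \<Rightarrow> real \<Rightarrow> 'a \<Rightarrow> nat" where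
  "ls_index A1 A2 B \<theta> \<delta> \<alpha> x = (LEAST j::nat.
      (\<alpha> * \<theta> ^ j) * inner (A2 x - A2 (fb_point A1 A2 B (\<alpha> * \<theta> ^ j) x)) (x - fb_point A1 A2 B (\<alpha> * \<theta> ^ j) x)
        \<le> \<delta> * (norm (x - fb_point A1 A2 B (\<alpha> * \<theta> ^ j) x))\<^sup>2)"

text \<open>One iteration of Method 1: maps (x^k, \<alpha>_{k-1}) to (x^{k+1}, \<alpha>_k).\<close>
definition method1_step :: "('a::real_inner \<Rightarrow> 'a) \<Rightarrow> ('a \<Rightarrow> 'a) \<Rightarrow> ('a \<Rightarrow> 'a set) \<Rightarrow> real \<Rightarrow> real \<Rightarrow> real \<Rightarrow> 'a \<times> real \<Rightarrow> 'a \<times> real" where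
  "method1_step A1 A2 B \<theta> \<delta> \<delta>bar p =
     (let x = fst p; \<alpha>old = snd p;
          \<alpha> = \<alpha>old * \<theta> ^ ls_index A1 A2 B \<theta> \<delta> \<alpha>old x;
          xb = fb_point A1 A2 B \<alpha> x;
          r = (\<delta>bar / \<alpha>) * (norm (x - xb))\<^sup>2;
          T = {y. inner ((1 / \<alpha>) *\<^sub>R (x - xb) - (A2 x - A2 xb)) (y - xb) \<le> r}
      in (proj T x, \<alpha>))"

text \<open>The sequence of pairs (x^k, \<alpha>_{k-1}), starting from (x^0, \<alpha>_{-1}).\<close>
definition method1_iter :: "('a::real_inner \<Rightarrow> 'a) \<Rightarrow> ('a \<Rightarrow> 'a) \<Rightarrow> ('a \<Rightarrow> 'a set) \<Rightarrow> real \<Rightarrow> real \<Rightarrow> real \<Rightarrow> 'a \<Rightarrow> real \<Rightarrow> nat \<Rightarrow> 'a \<times> real" where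
  "method1_iter A1 A2 B \<theta> \<delta> \<delta>bar x0 \<alpha>m1 k = (method1_step A1 A2 B \<theta> \<delta> \<delta>bar ^^ k) (x0, \<alpha>m1)"

end

theory Submission
  imports Defs
begin

text \<open>If x(k+1) = x(k) = x, then x is its own projection onto T(k), hence lies in T(k).
  With d = x - xbar(k), membership reads \<parallel>d\<parallel>^2 - \<alpha>(k) \<langle>A2 x - A2 xbar(k), d\<rangle> \<le> \<delta>bar \<parallel>d\<parallel>^2,
  and adding the line-search inequality \<alpha>(k) \<langle>A2 x - A2 xbar(k), d\<rangle> \<le> \<delta> \<parallel>d\<parallel>^2 gives
  (1 - \<delta> - \<delta>bar) \<parallel>d\<parallel>^2 \<le> 0. So x is a fixed point of the forward-backward map
  J(\<alpha>B)(I - \<alpha>A), i.e. a zero of A + B.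

  Two facts make this rigorous. The resolvent is defined everywhere (Minty's theorem): a
  minimiser (x, u) of the Fitzpatrick function of B plus \<parallel>(x, u)\<parallel>^2/2 satisfies u = -x and
  -x \<in> B x. And the line search terminates: away from zeros, \<parallel>x - J(\<alpha>B)(x - \<alpha>Ax)\<parallel>/\<alpha> is
  nonincreasing in \<alpha>, so the residual is at least of order \<alpha>, and uniform continuity of A2
  then makes the test hold for small \<alpha>.\<close>

lemma maximal_monotone_imp_monotone:
  "maximal_monotone B \<Longrightarrow> monotone_op B"
  unfolding maximal_monotone_def by blast

lemma monotone_opD:
  "monotone_op B \<Longrightarrow> u \<in> B x \<Longrightarrow> v \<in> B y \<Longrightarrow> 0 \<le> inner (u - v) (x - y)"
  unfolding monotone_op_def by blast

lemma maximal_monotoneD: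
  "maximal_monotone B \<Longrightarrow> (\<And>y v. v \<in> B y \<Longrightarrow> 0 \<le> inner (u - v) (x - y)) \<Longrightarrow> u \<in> B x"
  unfolding maximal_monotone_def by blast

text \<open>The epigraph of the Fitzpatrick function
  \<open>F\<^sub>B(x, u) = sup {\<langle>x, v\<rangle> + \<langle>y, u\<rangle> - \<langle>y, v\<rangle> | v \<in> B y}\<close>.\<close>

definition fitzpatrick_epigraph :: "('a::real_inner \<Rightarrow> 'a set) \<Rightarrow> (('a \<times> 'a) \<times> real) set" where
  "fitzpatrick_epigraph B = {((x, u), M). \<forall>y. \<forall>v\<in>B y. inner x v + inner y u - inner y v \<le> M}"

lemma fitzpatrick_epigraph_eq_Inter:
  "fitzpatrick_epigraph B = (\<Inter>y. \<Inter>v\<in>B y. {z. inner ((v, y), -1) z \<le> inner y v})"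
  by (force simp: fitzpatrick_epigraph_def inner_commute)

lemma convex_fitzpatrick_epigraph: "convex (fitzpatrick_epigraph B)"
  unfolding fitzpatrick_epigraph_eq_Inter by (intro convex_INT convex_halfspace_le)

lemma closed_fitzpatrick_epigraph: "closed (fitzpatrick_epigraph B)"
  unfolding fitzpatrick_epigraph_eq_Inter by (intro closed_INT ballI closed_halfspace_le)

lemma graph_in_fitzpatrick_epigraph:
  assumes "monotone_op B" "u \<in> B x"
  shows "((x, u), inner x u) \<in> fitzpatrick_epigraph B"
proof -
  have "inner x v + inner y u - inner y v \<le> inner x u" if "v \<in> B y" for y v
    using monotone_opD[OF assms that]
    by (simp add: inner_diff_left inner_diff_right inner_commute)
  then show ?thesis by (simp add: fitzpatrick_epigraph_def)
qed

lemma fitzpatrick_epigraph_inner_le: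
  assumes "maximal_monotone B" "((x, u), M) \<in> fitzpatrick_epigraph B"
  shows "inner x u \<le> M"
proof (rule ccontr)
  assume less: "\<not> inner x u \<le> M"
  have "u \<in> B x"
  proof (rule maximal_monotoneD[OF assms(1)])
    fix y v assume "v \<in> B y"
    then have "inner x v + inner y u - inner y v \<le> M"
      using assms(2) by (simp add: fitzpatrick_epigraph_def)
    with less show "0 \<le> inner (u - v) (x - y)"
      by (simp add: inner_diff_left inner_diff_right inner_commute)
  qed
  then have "inner x u + inner x u - inner x u \<le> M"
    using assms(2) unfolding fitzpatrick_epigraph_def by blast
  with less show False by simp
qed

lemma norm_midpoint_power2:
  fixes a b :: "'a::real_inner"
  shows "(norm ((1/2) *\<^sub>R a + (1/2) *\<^sub>R b))\<^sup>2
    = ((norm a)\<^sup>2 + (norm b)\<^sup>2) / 2 - (norm (a - b))\<^sup>2 / 4"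
  by (simp add: power2_norm_eq_inner inner_commute algebra_simps) (simp add: field_simps)

text \<open>The parallelogram law at the midpoint of two near-minimisers.\<close>

lemma convex_quadratic_minimising_seq_Cauchy:
  fixes E :: "('a::real_inner \<times> real) set"
  assumes "convex E" "\<And>n. z n \<in> E"
    and lower: "\<And>w. w \<in> E \<Longrightarrow> m \<le> snd w + (norm (fst w))\<^sup>2 / 2"
    and near: "\<And>n. snd (z n) + (norm (fst (z n)))\<^sup>2 / 2 < m + \<epsilon> n"
    and "\<epsilon> \<longlonglongrightarrow> 0"
  shows "Cauchy (\<lambda>n. fst (z n))"
proof (rule metric_CauchyI)
  define f where "f w = snd w + (norm (fst w))\<^sup>2 / 2" for w :: "'a \<times> real"
  have close: "(norm (fst (z n) - fst (z k)))\<^sup>2 < 4 * (\<epsilon> n + \<epsilon> k)" for n k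
  proof -
    have "(1/2) *\<^sub>R z n + (1/2) *\<^sub>R z k \<in> E"
      using convexD[OF assms(1) assms(2) assms(2)] by simp
    then have "m \<le> f ((1/2) *\<^sub>R z n + (1/2) *\<^sub>R z k)" unfolding f_def by (rule lower)
    also have "\<dots> = (f (z n) + f (z k)) / 2 - (norm (fst (z n) - fst (z k)))\<^sup>2 / 8"
      by (simp add: f_def norm_midpoint_power2) (simp add: field_simps)
    finally show ?thesis using near[of n] near[of k] unfolding f_def by argo
  qed
  fix e :: real assume "0 < e"
  then have "0 < e\<^sup>2 / 8" by simp
  then have "\<forall>\<^sub>F n in sequentially. \<epsilon> n < e\<^sup>2 / 8"
    by (rule order_tendstoD(2)[OF \<open>\<epsilon> \<longlonglongrightarrow> 0\<close>])
  then obtain N where N: "\<And>n. N \<le> n \<Longrightarrow> \<epsilon> n < e\<^sup>2 / 8"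
    by (auto simp: eventually_sequentially)
  have "dist (fst (z n)) (fst (z k)) < e" if "N \<le> n" "N \<le> k" for n k
  proof -
    have "(dist (fst (z n)) (fst (z k)))\<^sup>2 < e\<^sup>2"
      using close[of n k] N[OF that(1)] N[OF that(2)] unfolding dist_norm by argo
    with \<open>0 < e\<close> show ?thesis by (simp add: power_less_imp_less_base)
  qed
  then show "\<exists>N. \<forall>n\<ge>N. \<forall>k\<ge>N. dist (fst (z n)) (fst (z k)) < e" by blast
qed

lemma closed_convex_epigraph_quadratic_minimum:
  fixes E :: "('a::{real_inner,complete_space} \<times> real) set"
  assumes "convex E" "closed E" "E \<noteq> {}"
    and bounded: "\<And>p M. (p, M) \<in> E \<Longrightarrow> c \<le> M + (norm p)\<^sup>2 / 2"
  obtains p0 M0 where "(p0, M0) \<in> E"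
    "\<And>p M. (p, M) \<in> E \<Longrightarrow> M0 + (norm p0)\<^sup>2 / 2 \<le> M + (norm p)\<^sup>2 / 2"
proof -
  define f where "f w = snd w + (norm (fst w))\<^sup>2 / 2" for w :: "'a \<times> real"
  define m where "m = Inf (f ` E)"
  have m_le: "m \<le> f w" if "w \<in> E" for w
  proof -
    have "bdd_below (f ` E)"
      using bounded by (force simp: f_def bdd_below_def)
    with that show ?thesis by (simp add: m_def cInf_lower)
  qed
  define \<epsilon> where "\<epsilon> n = inverse (real (Suc n))" for n
  have \<epsilon>: "\<epsilon> \<longlonglongrightarrow> 0" unfolding \<epsilon>_def by (rule LIMSEQ_inverse_real_of_nat)
  have "\<exists>w\<in>E. f w < m + \<epsilon> n" for n
    using cInf_lessD[of "f ` E" "m + \<epsilon> n"] assms(3) by (simp add: m_def \<epsilon>_def)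
  then obtain z where z: "\<And>n. z n \<in> E" "\<And>n. f (z n) < m + \<epsilon> n"
    by metis
  have "Cauchy (\<lambda>n. fst (z n))"
    by (rule convex_quadratic_minimising_seq_Cauchy[OF assms(1) z(1) _ _ \<epsilon>])
      (use m_le z(2) in \<open>simp_all add: f_def\<close>)
  then obtain p0 where p0: "(\<lambda>n. fst (z n)) \<longlonglongrightarrow> p0"
    by (auto simp: Cauchy_convergent_iff convergent_def)
  define M0 where "M0 = m - (norm p0)\<^sup>2 / 2"
  have "(\<lambda>n. f (z n)) \<longlonglongrightarrow> m"
  proof (rule tendsto_sandwich)
    show "\<forall>\<^sub>F n in sequentially. m \<le> f (z n)" using m_le z(1) by simp
    show "\<forall>\<^sub>F n in sequentially. f (z n) \<le> m + \<epsilon> n"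
      by (simp add: less_imp_le z(2))
    show "(\<lambda>n. m + \<epsilon> n) \<longlonglongrightarrow> m"
      using tendsto_add[OF tendsto_const \<epsilon>] by simp
  qed simp
  then have "(\<lambda>n. f (z n) - (norm (fst (z n)))\<^sup>2 / 2) \<longlonglongrightarrow> M0"
    unfolding M0_def by (intro tendsto_diff tendsto_divide tendsto_power tendsto_norm p0 tendsto_const) auto
  then have "(\<lambda>n. snd (z n)) \<longlonglongrightarrow> M0" by (simp add: f_def)
  with p0 have "z \<longlonglongrightarrow> (p0, M0)"
    using tendsto_Pair[of "\<lambda>n. fst (z n)" p0 sequentially "\<lambda>n. snd (z n)" M0] by simp
  then have "(p0, M0) \<in> E" using closed_sequentially[OF assms(2)] z(1) by blast
  moreover have "M0 + (norm p0)\<^sup>2 / 2 \<le> M + (norm p)\<^sup>2 / 2" if "(p, M) \<in> E" for p M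
    using m_le[OF that] by (simp add: M0_def f_def)
  ultimately show ?thesis by (rule that)
qed

lemma epigraph_quadratic_minimum_variational_ineq:
  fixes E :: "('a::real_inner \<times> real) set"
  assumes "convex E" "(p0, M0) \<in> E"
    and minimum: "\<And>p M. (p, M) \<in> E \<Longrightarrow> M0 + (norm p0)\<^sup>2 / 2 \<le> M + (norm p)\<^sup>2 / 2"
    and "(p, M) \<in> E"
  shows "M0 \<le> M + inner p0 (p - p0)"
proof -
  define a where "a = M - M0 + inner p0 (p - p0)"
  define b where "b = (norm (p - p0))\<^sup>2 / 2"
  have "0 \<le> a + t * b" if "0 < t" "t < 1" for t
  proof -
    have "(p0 + t *\<^sub>R (p - p0), M0 + t * (M - M0)) \<in> E"
      using convexD[OF assms(1,2,4), of "1 - t" t] that by (simp add: algebra_simps)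
    from minimum[OF this]
    have "M0 + (norm p0)\<^sup>2 / 2 \<le> (M0 + t * (M - M0)) + (norm (p0 + t *\<^sub>R (p - p0)))\<^sup>2 / 2" .
    also have "(norm (p0 + t *\<^sub>R (p - p0)))\<^sup>2
        = (norm p0)\<^sup>2 + 2 * t * inner p0 (p - p0) + t\<^sup>2 * (norm (p - p0))\<^sup>2"
      unfolding power2_norm_eq_inner
      by (simp add: inner_commute algebra_simps power2_eq_square)
    finally have "0 \<le> t * (M - M0) + t * inner p0 (p - p0) + t\<^sup>2 * (norm (p - p0))\<^sup>2 / 2"
      by argo
    also have "\<dots> = t * (a + t * b)"
      by (simp add: a_def b_def algebra_simps power2_eq_square)
    finally have "0 \<le> t * (a + t * b)" .
    with \<open>0 < t\<close> show ?thesis by (simp add: zero_le_mult_iff)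
  qed
  then have "\<forall>\<^sub>F t in at_right 0. 0 \<le> a + t * b"
    using eventually_at_right_real[of 0 1] by (auto elim: eventually_mono)
  moreover have "((\<lambda>t. a + t * b) \<longlongrightarrow> a) (at_right 0)"
    by (auto intro!: tendsto_eq_intros)
  ultimately have "0 \<le> a" by (intro tendsto_lowerbound) auto
  then show ?thesis by (simp add: a_def)
qed

lemma maximal_monotone_graph_nonempty:
  assumes "maximal_monotone B"
  shows "\<exists>x u. u \<in> B x"
proof (rule ccontr)
  assume "\<nexists>x u. u \<in> B x"
  then have "0 \<in> B 0" using maximal_monotoneD[OF assms] by blast
  with \<open>\<nexists>x u. u \<in> B x\<close> show False by blast
qed

lemma fitzpatrick_epigraph_quadratic_nonneg:
  assumes "maximal_monotone B" "((x, u), M) \<in> fitzpatrick_epigraph B"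
  shows "0 \<le> M + (norm (x, u))\<^sup>2 / 2"
proof -
  have "inner x u \<le> M" using fitzpatrick_epigraph_inner_le[OF assms] .
  moreover have "(norm (x, u))\<^sup>2 = (norm (x + u))\<^sup>2 - 2 * inner x u"
    by (simp add: power2_norm_eq_inner inner_add_left inner_add_right inner_commute)
  ultimately show ?thesis using zero_le_power2[of "norm (x + u)"] by linarith
qed

theorem maximal_monotone_minty:
  fixes B :: "'a::{real_inner,complete_space} \<Rightarrow> 'a set"
  assumes "maximal_monotone B"
  shows "\<exists>x. - x \<in> B x"
proof -
  let ?E = "fitzpatrick_epigraph B"
  have mono: "monotone_op B" using assms by (rule maximal_monotone_imp_monotone)
  have "?E \<noteq> {}"
    using maximal_monotone_graph_nonempty[OF assms] graph_in_fitzpatrick_epigraph[OF mono] by blast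
  moreover have "0 \<le> M + (norm p)\<^sup>2 / 2" if "(p, M) \<in> ?E" for p M
    using fitzpatrick_epigraph_quadratic_nonneg[OF assms] that by (cases p) auto
  ultimately obtain p0 M0 where p0: "(p0, M0) \<in> ?E"
    and minimum: "\<And>p M. (p, M) \<in> ?E \<Longrightarrow> M0 + (norm p0)\<^sup>2 / 2 \<le> M + (norm p)\<^sup>2 / 2"
    using closed_convex_epigraph_quadratic_minimum[OF convex_fitzpatrick_epigraph
        closed_fitzpatrick_epigraph] by blast
  obtain x0 u0 where x0u0: "p0 = (x0, u0)" by fastforce
  have inner_le: "inner x0 u0 \<le> M0"
    using fitzpatrick_epigraph_inner_le[OF assms] p0 x0u0 by simp
  have variational: "M0 \<le> inner y v + inner x0 (y - x0) + inner u0 (v - u0)" if "v \<in> B y" for y v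
    using epigraph_quadratic_minimum_variational_ineq[OF convex_fitzpatrick_epigraph p0 minimum
        graph_in_fitzpatrick_epigraph[OF mono that]]
    by (simp add: x0u0)
  have "- x0 \<in> B (- u0)"
  proof (rule maximal_monotoneD[OF assms])
    fix y v assume "v \<in> B y"
    from variational[OF this] inner_le show "0 \<le> inner (- x0 - v) (- u0 - y)"
      using inner_ge_zero[of "x0 + u0"]
      by (simp add: inner_commute algebra_simps)
  qed
  from variational[OF this] inner_le have "inner (x0 + u0) (x0 + u0) \<le> 0"
    by (simp add: inner_commute algebra_simps)
  then have "x0 + u0 = 0" by (metis inner_eq_zero_iff inner_ge_zero order_antisym)
  then have "u0 = - x0" by (simp add: add_eq_0_iff)
  with \<open>- x0 \<in> B (- u0)\<close> show ?thesis by auto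
qed

lemma maximal_monotone_scaled_shift:
  assumes "maximal_monotone B" "0 < \<alpha>"
  shows "maximal_monotone (\<lambda>x. (\<lambda>v. \<alpha> *\<^sub>R v) ` B (x + z))"
  unfolding maximal_monotone_def monotone_op_def
proof safe
  have mono: "monotone_op B" using assms(1) by (rule maximal_monotone_imp_monotone)
  fix x y b c assume "b \<in> B (x + z)" "c \<in> B (y + z)"
  from monotone_opD[OF mono this] have "0 \<le> \<alpha> * inner (b - c) (x - y)"
    using assms(2) by simp
  then show "0 \<le> inner (\<alpha> *\<^sub>R b - \<alpha> *\<^sub>R c) (x - y)"
    by (simp add: scaleR_diff_right[symmetric])
next
  fix x u
  assume h: "\<forall>y v. v \<in> (\<lambda>v. \<alpha> *\<^sub>R v) ` B (y + z) \<longrightarrow> 0 \<le> inner (u - v) (x - y)"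
  have "(1 / \<alpha>) *\<^sub>R u \<in> B (x + z)"
  proof (rule maximal_monotoneD[OF assms(1)])
    fix y c assume "c \<in> B y"
    then have "\<alpha> *\<^sub>R c \<in> (\<lambda>v. \<alpha> *\<^sub>R v) ` B ((y - z) + z)" by auto
    then have "0 \<le> inner (u - \<alpha> *\<^sub>R c) (x - (y - z))" using h by blast
    also have "u - \<alpha> *\<^sub>R c = \<alpha> *\<^sub>R ((1 / \<alpha>) *\<^sub>R u - c)"
      using assms(2) by (simp add: algebra_simps)
    finally have "0 \<le> \<alpha> * inner ((1 / \<alpha>) *\<^sub>R u - c) (x + z - y)"
      by (simp only: inner_scaleR_left diff_diff_eq2)
    then show "0 \<le> inner ((1 / \<alpha>) *\<^sub>R u - c) (x + z - y)"
      using assms(2) by (simp add: zero_le_mult_iff)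
  qed
  moreover have "u = \<alpha> *\<^sub>R ((1 / \<alpha>) *\<^sub>R u)" using assms(2) by simp
  ultimately show "u \<in> (\<lambda>v. \<alpha> *\<^sub>R v) ` B (x + z)" by blast
qed

lemma resolvent_unique:
  assumes "monotone_op B" "0 < \<alpha>"
    and "z - p \<in> (\<lambda>v. \<alpha> *\<^sub>R v) ` B p" "z - q \<in> (\<lambda>v. \<alpha> *\<^sub>R v) ` B q"
  shows "p = q"
proof -
  obtain b c where bc: "b \<in> B p" "z - p = \<alpha> *\<^sub>R b" "c \<in> B q" "z - q = \<alpha> *\<^sub>R c"
    using assms(3,4) by blast
  have "\<alpha> *\<^sub>R (b - c) = q - p" using bc(2,4) by (simp add: algebra_simps)
  then have "\<alpha> * inner (b - c) (p - q) = - inner (p - q) (p - q)"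
    by (metis inner_minus_left inner_scaleR_left minus_diff_eq)
  moreover have "0 \<le> \<alpha> * inner (b - c) (p - q)"
    using monotone_opD[OF assms(1) bc(1,3)] assms(2) by simp
  ultimately have "inner (p - q) (p - q) \<le> 0" by simp
  then show "p = q" by (metis eq_iff_diff_eq_0 inner_eq_zero_iff inner_ge_zero order_antisym)
qed

lemma resolvent_eq_iff:
  fixes B :: "'a::{real_inner,complete_space} \<Rightarrow> 'a set"
  assumes "maximal_monotone B" "0 < \<alpha>"
  shows "resolvent \<alpha> B z = p \<longleftrightarrow> z - p \<in> (\<lambda>v. \<alpha> *\<^sub>R v) ` B p"
proof -
  obtain x where "- x \<in> (\<lambda>v. \<alpha> *\<^sub>R v) ` B (x + z)"
    using maximal_monotone_minty[OF maximal_monotone_scaled_shift[OF assms]] by blast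
  then have "z - (x + z) \<in> (\<lambda>v. \<alpha> *\<^sub>R v) ` B (x + z)" by simp
  moreover note resolvent_unique[OF maximal_monotone_imp_monotone[OF assms(1)] assms(2)]
  ultimately have "\<exists>!p. z - p \<in> (\<lambda>v. \<alpha> *\<^sub>R v) ` B p" by blast
  then show ?thesis unfolding resolvent_def by (metis (mono_tags, lifting) the1_equality)
qed

lemma fb_point_eq_self_iff:
  fixes B :: "'a::{real_inner,complete_space} \<Rightarrow> 'a set"
  assumes "maximal_monotone B" "0 < \<alpha>"
  shows "fb_point A1 A2 B \<alpha> x = x \<longleftrightarrow> 0 \<in> (\<lambda>b. A1 x + A2 x + b) ` B x"
proof -
  have "fb_point A1 A2 B \<alpha> x = x \<longleftrightarrow> - (\<alpha> *\<^sub>R (A1 x + A2 x)) \<in> (\<lambda>v. \<alpha> *\<^sub>R v) ` B x"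
    unfolding fb_point_def resolvent_eq_iff[OF assms] by simp
  also have "\<dots> \<longleftrightarrow> - (A1 x + A2 x) \<in> B x"
    using assms(2) by (auto simp flip: scaleR_minus_right)
  also have "\<dots> \<longleftrightarrow> 0 \<in> (\<lambda>b. A1 x + A2 x + b) ` B x"
    by (auto simp: add_eq_0_iff)
  finally show ?thesis .
qed

lemma proj_eqI:
  assumes "convex C" "p \<in> C" "\<And>y. y \<in> C \<Longrightarrow> dist x p \<le> dist x y"
  shows "proj C x = p"
  unfolding proj_def
proof (rule the_equality)
  show "p \<in> C \<and> (\<forall>y\<in>C. dist x p \<le> dist x y)" using assms(2,3) by blast
next
  fix q assume q: "q \<in> C \<and> (\<forall>y\<in>C. dist x q \<le> dist x y)"
  then have same_dist: "norm (x - q) = norm (x - p)"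
    using assms(2,3) by (metis dist_norm order_antisym)
  have "(1/2) *\<^sub>R p + (1/2) *\<^sub>R q \<in> C"
    using convexD[OF assms(1,2)] q by simp
  moreover have "x = (1/2) *\<^sub>R x + (1/2) *\<^sub>R x" by (simp flip: scaleR_add_left)
  then have "x - ((1/2) *\<^sub>R p + (1/2) *\<^sub>R q) = (1/2) *\<^sub>R (x - p) + (1/2) *\<^sub>R (x - q)"
    by (simp add: algebra_simps)
  ultimately have "norm (x - p) \<le> norm ((1/2) *\<^sub>R (x - p) + (1/2) *\<^sub>R (x - q))"
    using assms(3) by (metis dist_norm)
  then have "(norm (x - p))\<^sup>2 \<le> (norm ((1/2) *\<^sub>R (x - p) + (1/2) *\<^sub>R (x - q)))\<^sup>2"
    by (simp add: power_mono)
  also have "\<dots> = (norm (x - p))\<^sup>2 - (norm (q - p))\<^sup>2 / 4"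
    by (simp add: norm_midpoint_power2 same_dist)
  finally show "q = p" by simp
qed

lemma proj_halfspace_eq_self_imp_mem:
  fixes w c x :: "'a::real_inner"
  assumes "0 \<le> r" "proj {y. inner w (y - c) \<le> r} x = x"
  shows "inner w (x - c) \<le> r"
proof (rule ccontr)
  let ?T = "{y. inner w (y - c) \<le> r}"
  assume outside: "\<not> inner w (x - c) \<le> r"
  with assms(1) have "w \<noteq> 0" by auto
  define s where "s = (inner w (x - c) - r) / (norm w)\<^sup>2"
  define p where "p = x - s *\<^sub>R w"
  have "inner w (p - c) = r"
    using \<open>w \<noteq> 0\<close> by (simp add: p_def s_def inner_diff_right power2_norm_eq_inner)
  then have "p \<in> ?T" by simp
  have "convex ?T"
    using convex_halfspace_le[of w "r + inner w c"] by (simp add: algebra_simps)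
  moreover have "dist x p \<le> dist x y" if "y \<in> ?T" for y
  proof -
    have "s * (norm w)\<^sup>2 \<le> inner w (x - y)"
      using that \<open>w \<noteq> 0\<close> by (simp add: s_def inner_diff_right)
    also have "\<dots> \<le> norm w * norm (x - y)" by (rule norm_cauchy_schwarz)
    finally have "s * norm w \<le> norm (x - y)"
      using \<open>w \<noteq> 0\<close> by (simp add: power2_eq_square)
    moreover have "0 \<le> s" using outside by (simp add: s_def)
    ultimately show ?thesis by (simp add: dist_norm p_def)
  qed
  ultimately have "proj ?T x = p" using \<open>p \<in> ?T\<close> by (blast intro: proj_eqI)
  with assms(2) \<open>p \<in> ?T\<close> outside show False by simp
qed

lemma resolvent_residual_ratio_antimono:
  fixes B :: "'a::{real_inner,complete_space} \<Rightarrow> 'a set"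
  assumes "maximal_monotone B" "0 < a" "a \<le> a'"
  shows "norm (x - resolvent a' B (x - a' *\<^sub>R u)) / a'
    \<le> norm (x - resolvent a B (x - a *\<^sub>R u)) / a"
proof -
  define d where "d t = x - resolvent t B (x - t *\<^sub>R u)" for t
  have mem: "(1 / t) *\<^sub>R d t - u \<in> B (x - d t)" if t: "0 < t" for t
  proof -
    obtain b where b: "b \<in> B (x - d t)" "d t - t *\<^sub>R u = t *\<^sub>R b"
      using resolvent_eq_iff[OF assms(1) t, of "x - t *\<^sub>R u" "x - d t"]
      by (auto simp: d_def algebra_simps)
    from b(2) have "(1 / t) *\<^sub>R d t - u = b"
      using t by (simp add: algebra_simps)
    with b(1) show ?thesis by simp
  qed
  have "0 < a'" using assms(2,3) by simp
  let ?s = "norm (d a)" and ?t = "norm (d a')"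
  have "0 \<le> inner (((1 / a) *\<^sub>R d a - u) - ((1 / a') *\<^sub>R d a' - u)) ((x - d a) - (x - d a'))"
    using monotone_opD[OF maximal_monotone_imp_monotone[OF assms(1)]
        mem[OF assms(2)] mem[OF \<open>0 < a'\<close>]] .
  then have "?s\<^sup>2 / a + ?t\<^sup>2 / a' \<le> (1 / a + 1 / a') * inner (d a) (d a')"
    by (simp add: power2_norm_eq_inner inner_commute algebra_simps)
  also have "\<dots> \<le> (1 / a + 1 / a') * (?s * ?t)"
    using assms(2) \<open>0 < a'\<close> by (intro mult_left_mono norm_cauchy_schwarz) auto
  also have "\<dots> = ?s\<^sup>2 / a + ?t\<^sup>2 / a' - (?s / a - ?t / a') * (?s - ?t)"
    using assms(2) \<open>0 < a'\<close> by (simp add: field_simps power2_eq_square)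
  finally have "(?s / a - ?t / a') * (?s - ?t) \<le> 0" by simp
  have "?t / a' \<le> ?s / a"
  proof (rule ccontr)
    assume "\<not> ?t / a' \<le> ?s / a"
    with \<open>(?s / a - ?t / a') * (?s - ?t) \<le> 0\<close> have "?t \<le> ?s"
      by (simp add: mult_le_0_iff)
    have "?t / a' \<le> ?t / a"
      using assms(2,3) by (intro divide_left_mono) auto
    also have "\<dots> \<le> ?s / a"
      using \<open>?t \<le> ?s\<close> assms(2) by (simp add: divide_right_mono)
    finally show False using \<open>\<not> ?t / a' \<le> ?s / a\<close> by simp
  qed
  then show ?thesis by (simp add: d_def)
qed

lemma norm_diff_le_by_chaining:
  fixes f :: "'a::real_normed_vector \<Rightarrow> 'b::real_normed_vector"
  assumes step: "\<And>p q. norm (p - q) < e \<Longrightarrow> norm (f p - f q) \<le> 1"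
    and "norm (p - q) < real (Suc n) * e"
  shows "norm (f p - f q) \<le> real (Suc n)"
  using assms(2)
proof (induction n arbitrary: p)
  case 0
  then show ?case using step by simp
next
  case (Suc n)
  define r where "r = q + (real (Suc n) / real (Suc (Suc n))) *\<^sub>R (p - q)"
  have "norm (r - q) = (real (Suc n) / real (Suc (Suc n))) * norm (p - q)"
    by (simp add: r_def)
  also have "\<dots> < (real (Suc n) / real (Suc (Suc n))) * (real (Suc (Suc n)) * e)"
    using Suc.prems by (intro mult_strict_left_mono) auto
  also have "\<dots> = real (Suc n) * e" by simp
  finally have "norm (f r - f q) \<le> real (Suc n)" by (rule Suc.IH)
  moreover have "norm (p - r) = norm (p - q) / real (Suc (Suc n))"
  proof -
    have "p - r = (1 - real (Suc n) / real (Suc (Suc n))) *\<^sub>R (p - q)"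
      by (simp add: r_def algebra_simps)
    also have "1 - real (Suc n) / real (Suc (Suc n)) = 1 / real (Suc (Suc n))"
      by (simp add: field_simps)
    finally show ?thesis by simp
  qed
  then have "norm (f p - f r) \<le> 1"
    using Suc.prems by (intro step) (simp add: pos_divide_less_eq mult.commute)
  ultimately show ?case
    using norm_triangle_ineq[of "f p - f r" "f r - f q"] by simp
qed

lemma uniformly_continuous_on_UNIV_lipschitz_at_large:
  fixes f :: "'a::real_normed_vector \<Rightarrow> 'b::real_normed_vector"
  assumes "uniformly_continuous_on UNIV f" "0 < \<eta>"
  obtains K where "0 < K" "\<And>p q. \<eta> \<le> norm (p - q) \<Longrightarrow> norm (f p - f q) \<le> K * norm (p - q)"
proof -
  obtain e where "0 < e" and step: "\<And>p q. norm (p - q) < e \<Longrightarrow> norm (f p - f q) \<le> 1"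
    using assms(1) unfolding uniformly_continuous_on_def dist_norm
    by (metis UNIV_I less_imp_le zero_less_one)
  have "norm (f p - f q) \<le> (1 / e + 1 / \<eta>) * norm (p - q)" if "\<eta> \<le> norm (p - q)" for p q
  proof -
    define n where "n = nat \<lfloor>norm (p - q) / e\<rfloor>"
    have n: "real n \<le> norm (p - q) / e" "norm (p - q) / e < real n + 1"
      using \<open>0 < e\<close> by (simp_all add: n_def floor_less_iff)
    have "norm (p - q) < (real n + 1) * e"
      using n(2) \<open>0 < e\<close> by (simp add: divide_less_eq)
    then have "norm (p - q) < real (Suc n) * e" by (simp add: algebra_simps)
    note norm_diff_le_by_chaining[OF step this]
    then have "norm (f p - f q) \<le> real (Suc n)" .
    also have "\<dots> \<le> norm (p - q) / e + norm (p - q) / \<eta>"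
    proof -
      have "1 \<le> norm (p - q) / \<eta>" using that assms(2) by simp
      with n(1) show ?thesis by simp
    qed
    finally show ?thesis by (simp add: algebra_simps)
  qed
  moreover have "0 < 1 / e + 1 / \<eta>" using \<open>0 < e\<close> assms(2) by (simp add: add_pos_pos)
  ultimately show ?thesis using that by blast
qed

lemma uniformly_continuous_on_UNIV_small_step:
  fixes f :: "'a::real_normed_vector \<Rightarrow> 'b::real_normed_vector"
  assumes "uniformly_continuous_on UNIV f" "0 < c" "0 < \<delta>"
  obtains a1 where "0 < a1"
    "\<And>a p q. 0 < a \<Longrightarrow> a \<le> a1 \<Longrightarrow> c * a \<le> norm (p - q)
      \<Longrightarrow> a * norm (f p - f q) \<le> \<delta> * norm (p - q)"
proof -
  obtain \<eta> where "0 < \<eta>" and near: "\<And>p q. norm (p - q) < \<eta> \<Longrightarrow> norm (f p - f q) < \<delta> * c"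
    using assms unfolding uniformly_continuous_on_def dist_norm by (metis UNIV_I mult_pos_pos)
  obtain K where "0 < K" and far: "\<And>p q. \<eta> \<le> norm (p - q) \<Longrightarrow> norm (f p - f q) \<le> K * norm (p - q)"
    using uniformly_continuous_on_UNIV_lipschitz_at_large[OF assms(1) \<open>0 < \<eta>\<close>] by blast
  have "a * norm (f p - f q) \<le> \<delta> * norm (p - q)"
    if "0 < a" "a \<le> \<delta> / K" "c * a \<le> norm (p - q)" for a p q
  proof (cases "norm (p - q) < \<eta>")
    case True
    then have "a * norm (f p - f q) \<le> a * (\<delta> * c)"
      using near[of p q] \<open>0 < a\<close> by simp
    also have "\<dots> \<le> \<delta> * norm (p - q)"
      using that(3) assms(3) by (simp add: mult.left_commute mult.commute)
    finally show ?thesis .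
  next
    case False
    then have "a * norm (f p - f q) \<le> a * (K * norm (p - q))"
      using far[of p q] \<open>0 < a\<close> by simp
    also have "\<dots> \<le> \<delta> * norm (p - q)"
      using that(2) \<open>0 < K\<close> by (simp add: mult_right_mono pos_le_divide_eq mult.assoc[symmetric])
    finally show ?thesis .
  qed
  moreover have "0 < \<delta> / K" using assms(3) \<open>0 < K\<close> by simp
  ultimately show ?thesis using that by blast
qed

definition ls_condition ::
    "('a::real_inner \<Rightarrow> 'a) \<Rightarrow> ('a \<Rightarrow> 'a) \<Rightarrow> ('a \<Rightarrow> 'a set) \<Rightarrow> real \<Rightarrow> real \<Rightarrow> 'a \<Rightarrow> bool" where
  "ls_condition A1 A2 B \<delta> a x \<longleftrightarrow>
     a * inner (A2 x - A2 (fb_point A1 A2 B a x)) (x - fb_point A1 A2 B a x)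
       \<le> \<delta> * (norm (x - fb_point A1 A2 B a x))\<^sup>2"

lemma ls_index_eq_Least:
  "ls_index A1 A2 B \<theta> \<delta> \<alpha> x = (LEAST j. ls_condition A1 A2 B \<delta> (\<alpha> * \<theta> ^ j) x)"
  by (simp add: ls_index_def ls_condition_def)

lemma ex_ls_condition:
  fixes B :: "'a::{real_inner,complete_space} \<Rightarrow> 'a set"
  assumes "maximal_monotone B" "uniformly_continuous_on UNIV A2"
    and "0 < \<theta>" "\<theta> < 1" "0 < \<delta>" "0 < \<alpha>"
  shows "\<exists>j. ls_condition A1 A2 B \<delta> (\<alpha> * \<theta> ^ j) x"
proof (cases "0 \<in> (\<lambda>b. A1 x + A2 x + b) ` B x")
  case True
  then have "fb_point A1 A2 B \<alpha> x = x" using fb_point_eq_self_iff[OF assms(1,6), of A1 A2 x] by simp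
  then have "ls_condition A1 A2 B \<delta> (\<alpha> * \<theta> ^ 0) x" by (simp add: ls_condition_def)
  then show ?thesis ..
next
  case False
  define d where "d a = x - fb_point A1 A2 B a x" for a
  define c where "c = norm (d \<alpha>) / \<alpha>"
  have "fb_point A1 A2 B \<alpha> x \<noteq> x"
    using False fb_point_eq_self_iff[OF assms(1,6), of A1 A2 x] by simp
  with assms(6) have "0 < c" by (simp add: c_def d_def)
  have residual_lower: "c * a \<le> norm (d a)" if "0 < a" "a \<le> \<alpha>" for a
  proof -
    have "c \<le> norm (d a) / a"
      using resolvent_residual_ratio_antimono[OF assms(1) that, of x "A1 x + A2 x"]
      by (simp add: c_def d_def fb_point_def)
    with \<open>0 < a\<close> show ?thesis by (simp add: pos_le_divide_eq)
  qed
  obtain a1 where "0 < a1" and small: "\<And>a p q. 0 < a \<Longrightarrow> a \<le> a1 \<Longrightarrow> c * a \<le> norm (p - q)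
      \<Longrightarrow> a * norm (A2 p - A2 q) \<le> \<delta> * norm (p - q)"
    using uniformly_continuous_on_UNIV_small_step[OF assms(2) \<open>0 < c\<close> assms(5)] by blast
  obtain j where "\<theta> ^ j < min a1 \<alpha> / \<alpha>"
    using real_arch_pow_inv[of "min a1 \<alpha> / \<alpha>" \<theta>] \<open>0 < a1\<close> assms(3,4,6) by auto
  then have a: "0 < \<alpha> * \<theta> ^ j" "\<alpha> * \<theta> ^ j \<le> a1" "\<alpha> * \<theta> ^ j \<le> \<alpha>"
    using assms(3,6) by (simp_all add: pos_less_divide_eq mult.commute)
  let ?a = "\<alpha> * \<theta> ^ j" and ?xb = "fb_point A1 A2 B (\<alpha> * \<theta> ^ j) x"
  have "?a * inner (A2 x - A2 ?xb) (x - ?xb) \<le> ?a * (norm (A2 x - A2 ?xb) * norm (x - ?xb))"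
    using a(1) by (intro mult_left_mono norm_cauchy_schwarz) simp
  also have "\<dots> = ?a * norm (A2 x - A2 ?xb) * norm (x - ?xb)" by (simp only: mult.assoc)
  also have "\<dots> \<le> \<delta> * norm (x - ?xb) * norm (x - ?xb)"
    using small[OF a(1,2) residual_lower[OF a(1,3), unfolded d_def]]
    by (simp add: mult_right_mono)
  finally have "ls_condition A1 A2 B \<delta> ?a x"
    by (simp add: ls_condition_def power2_eq_square mult.assoc)
  then show ?thesis ..
qed

lemma ls_condition_ls_index:
  fixes B :: "'a::{real_inner,complete_space} \<Rightarrow> 'a set"
  assumes "maximal_monotone B" "uniformly_continuous_on UNIV A2"
    and "0 < \<theta>" "\<theta> < 1" "0 < \<delta>" "0 < \<alpha>"
  shows "ls_condition A1 A2 B \<delta> (\<alpha> * \<theta> ^ ls_index A1 A2 B \<theta> \<delta> \<alpha> x) x"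
  unfolding ls_index_eq_Least using ex_ls_condition[OF assms] by (rule LeastI_ex)

lemma method1_step_fixed_imp_zero:
  fixes B :: "'a::{real_inner,complete_space} \<Rightarrow> 'a set"
  assumes "maximal_monotone B" "uniformly_continuous_on UNIV A2"
    and "0 < \<theta>" "\<theta> < 1" "0 < \<delta>" "0 < \<delta>bar" "\<delta> + \<delta>bar < 1" "0 < \<alpha>"
    and fixed: "fst (method1_step A1 A2 B \<theta> \<delta> \<delta>bar (x, \<alpha>)) = x"
  shows "0 \<in> (\<lambda>b. A1 x + A2 x + b) ` B x"
proof -
  define a where "a = \<alpha> * \<theta> ^ ls_index A1 A2 B \<theta> \<delta> \<alpha> x"
  define xb where "xb = fb_point A1 A2 B a x"
  define d where "d = x - xb"
  define g where "g = A2 x - A2 xb"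
  have "0 < a" using assms(3,8) by (simp add: a_def)
  have ls: "a * inner g d \<le> \<delta> * (norm d)\<^sup>2"
    using ls_condition_ls_index[OF assms(1-5,8)]
    by (simp add: ls_condition_def a_def xb_def d_def g_def)
  have "proj {y. inner ((1 / a) *\<^sub>R d - g) (y - xb) \<le> (\<delta>bar / a) * (norm d)\<^sup>2} x = x"
    using fixed by (simp add: method1_step_def Let_def a_def xb_def d_def g_def)
  then have "inner ((1 / a) *\<^sub>R d - g) d \<le> (\<delta>bar / a) * (norm d)\<^sup>2"
    using \<open>0 < a\<close> assms(6) unfolding d_def by (intro proj_halfspace_eq_self_imp_mem) simp_all
  then have "(1 / a) * (norm d)\<^sup>2 - inner g d \<le> (\<delta>bar / a) * (norm d)\<^sup>2"
    by (simp add: inner_diff_left power2_norm_eq_inner)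
  then have "a * ((1 / a) * (norm d)\<^sup>2 - inner g d) \<le> a * ((\<delta>bar / a) * (norm d)\<^sup>2)"
    using \<open>0 < a\<close> by (intro mult_left_mono) auto
  then have "(norm d)\<^sup>2 - a * inner g d \<le> \<delta>bar * (norm d)\<^sup>2"
    using \<open>0 < a\<close> by (simp add: right_diff_distrib)
  with ls have "(1 - \<delta> - \<delta>bar) * (norm d)\<^sup>2 \<le> 0"
    by (simp add: algebra_simps)
  with assms(7) have "xb = x" by (simp add: mult_le_0_iff d_def)
  then show ?thesis
    using fb_point_eq_self_iff[OF assms(1) \<open>0 < a\<close>] by (simp add: xb_def)
qed

lemma method1_iter_Suc:
  "method1_iter A1 A2 B \<theta> \<delta> \<delta>bar x0 \<alpha>m1 (Suc k)
     = method1_step A1 A2 B \<theta> \<delta> \<delta>bar (method1_iter A1 A2 B \<theta> \<delta> \<delta>bar x0 \<alpha>m1 k)"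
  by (simp add: method1_iter_def)

lemma snd_method1_iter_pos:
  assumes "0 < \<theta>" "0 < \<alpha>m1"
  shows "0 < snd (method1_iter A1 A2 B \<theta> \<delta> \<delta>bar x0 \<alpha>m1 k)"
proof (induction k)
  case 0
  then show ?case using assms(2) by (simp add: method1_iter_def)
next
  case (Suc k)
  then show ?case
    using assms(1) by (simp add: method1_iter_Suc method1_step_def Let_def)
qed

theorem proposition4p6:
  fixes A1 A2 :: "'a::{real_inner, complete_space} \<Rightarrow> 'a"
    and B :: "'a \<Rightarrow> 'a set"
    and \<beta> \<theta> \<delta> \<delta>bar \<alpha>m1 :: real and x0 :: 'a and k :: nat
  assumes "\<beta> > 0" and "cocoercive \<beta> A1"
    and "maximal_monotone (\<lambda>x. {A2 x})" and "uniformly_continuous_on UNIV A2"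
    and "maximal_monotone B"
    and "\<exists>z. 0 \<in> (\<lambda>b. A1 z + A2 z + b) ` B z"
    and "0 < \<theta>" "\<theta> < 1" "0 < \<delta>" "\<delta> < 1" "\<delta>bar > 0" "1 - \<delta> - \<delta>bar > 0"
    and "\<alpha>m1 > 0" "\<alpha>m1 \<le> 4 * \<beta> * \<delta>bar"
    and "fst (method1_iter A1 A2 B \<theta> \<delta> \<delta>bar x0 \<alpha>m1 (Suc k))
           = fst (method1_iter A1 A2 B \<theta> \<delta> \<delta>bar x0 \<alpha>m1 k)"
  shows "0 \<in> (\<lambda>b. A1 (fst (method1_iter A1 A2 B \<theta> \<delta> \<delta>bar x0 \<alpha>m1 k))
                 + A2 (fst (method1_iter A1 A2 B \<theta> \<delta> \<delta>bar x0 \<alpha>m1 k)) + b)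
           ` B (fst (method1_iter A1 A2 B \<theta> \<delta> \<delta>bar x0 \<alpha>m1 k))"
proof -
  obtain x \<alpha> where x\<alpha>: "method1_iter A1 A2 B \<theta> \<delta> \<delta>bar x0 \<alpha>m1 k = (x, \<alpha>)"
    by fastforce
  have "0 < \<alpha>" using snd_method1_iter_pos[OF assms(7,13)] x\<alpha> by (metis snd_conv)
  moreover have "fst (method1_step A1 A2 B \<theta> \<delta> \<delta>bar (x, \<alpha>)) = x"
    using assms(15) x\<alpha> by (simp add: method1_iter_Suc)
  ultimately have "0 \<in> (\<lambda>b. A1 x + A2 x + b) ` B x"
    using assms(12) by (intro method1_step_fixed_imp_zero[OF assms(5,4,7,8,9,11)]) auto
  then show ?thesis by (simp add: x\<alpha>)
qed

end
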